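(* Let $0<s_1<s_2$ and for $m\ge1$ let $\mathcal C_N$, $N=4m+1$, be the defect capacitance matrix. Then there exists $N_0$ such that for all such $N\ge N_0$, $\mathcal C_N$ has exactly one eigenvalue $\lambda^{(N)}$ in $\Gamma=\big(\frac2{s_2},\frac2{s_1}\big)$. Moreover, with $$\lambda_*:=\frac12\left(\frac{3}{s_1}+\frac{3}{s_2}-\sqrt{\frac{9}{s_1^2}-\frac{14}{s_1s_2}+\frac{9}{s_2^2}}\right)\in\Gamma,$$ there exist constants $A,B>0$ independent of $N$ such that $|\lambda^{(N)}-\lambda_*|<Ae^{-BN}$ for all such $N\ge N_0$. Consequently, for fixed $v_b,\delta>0$, the leading-order interface frequencies $\omega^{(N)}:=v_b\sqrt{\delta\lambda^{(N)}}$ satisfy $|\omega^{(N)}-\omega_*|<A'e^{-BN}$ for some $A'>0$ independent of $N$, where $\omega_*=v_b\sqrt{\delta\lambda_*}$.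
   Context: Set $\alpha=\frac1{s_1}+\frac1{s_2}$, $\beta_1=-\frac1{s_1}$, $\beta_2=-\frac1{s_2}$, $\eta=\frac2{s_2}$. The defect capacitance matrix $\mathcal C_N$ ($N=4m+1$) is the real symmetric tridiagonal matrix with diagonal entries $(\mathcal C_N)_{11}=(\mathcal C_N)_{NN}=\frac1{s_1}$, $(\mathcal C_N)_{2m+1,2m+1}=\eta$, $(\mathcal C_N)_{ii}=\alpha$ otherwise, and off-diagonal entries $(\mathcal C_N)_{i,i+1}=(\mathcal C_N)_{i+1,i}$ equal to $\beta_1$ ($i$ odd) and $\beta_2$ ($i$ even) for $1\le i\le 2m$, and $\beta_2$ ($i$ odd) and $\beta_1$ ($i$ even) for $2m+1\le i\le 4m$. In the high-contrast model, the subwavelength resonant frequencies of the chain are $v_b\sqrt{\delta\lambda}+O(\delta)$, $\lambda$ ranging over eigenvalues of the capacitance matrix, where $\delta$ is the density contrast and $v_b$ the wave speed in the resonators. *)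

theory Defs
  imports Complex_Main "Jordan_Normal_Form.Char_Poly"
begin

definition cap_entry :: "real \<Rightarrow> real \<Rightarrow> nat \<Rightarrow> nat \<Rightarrow> nat \<Rightarrow> real" where
  "cap_entry s1 s2 m i j =
     (let N = 4*m+1; \<alpha> = 1/s1 + 1/s2; \<beta>1 = -1/s1; \<beta>2 = -1/s2; \<eta> = 2/s2;
          off = (\<lambda>k::nat. if k \<le> 2*m then (if odd k then \<beta>1 else \<beta>2)
                           else (if odd k then \<beta>2 else \<beta>1))
      in if i = j then
           (if i = 1 \<or> i = N then 1/s1 else if i = 2*m+1 then \<eta> else \<alpha>)
         else if j = i + 1 then off i
         else if i = j + 1 then off j
         else 0)"

text \<open>The N x N matrix (0-based indices in the library shifted to 1-based entries).\<close>
definition cap_mat :: "real \<Rightarrow> real \<Rightarrow> nat \<Rightarrow> real mat" where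
  "cap_mat s1 s2 m = mat (4*m+1) (4*m+1) (\<lambda>(i,j). cap_entry s1 s2 m (i+1) (j+1))"

definition lambda_star :: "real \<Rightarrow> real \<Rightarrow> real" where
  "lambda_star s1 s2 = (3/s1 + 3/s2 - sqrt (9/s1^2 - 14/(s1*s2) + 9/s2^2)) / 2"

end

theory Submission
  imports Defs
begin

text \<open>
  On each half of the chain an eigenvector of \<open>C_N\<close> is determined by its first entry through
  the transfer-matrix recurrence of the dimer, and symmetry of the eigenvector reduces the
  eigenvalue problem to a single condition at the defect. In the band gap \<open>(2/s\<^sub>2, 2/s\<^sub>1)\<close>
  the recurrence is solved by Chebyshev polynomials \<open>U_n(c)\<close> with \<open>c > 1\<close>, and the defect
  condition becomes \<open>U_m(c)/U_{m-1}(c) = 3 - s\<^sub>1 \<lambda>\<close>. The ratio increases in \<open>\<lambda>\<close> while the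
  right-hand side decreases, giving at most one root; the ratio exceeds the growing root
  \<open>\<nu> = c + \<surd>(c\<^sup>2 - 1)\<close> of \<open>t\<^sup>2 - 2ct + 1\<close> by at most \<open>\<nu>\<^sup>1\<^sup>-\<^sup>2\<^sup>m\<close>, which yields existence for
  large \<open>m\<close> and exponential convergence to the solution \<open>\<lambda>\<^sub>*\<close> of the limiting equation
  \<open>\<nu>(c(\<lambda>)) = 3 - s\<^sub>1 \<lambda>\<close>, i.e. of the quadratic \<open>\<lambda>\<^sup>2 - 3(1/s\<^sub>1 + 1/s\<^sub>2)\<lambda> + 8/(s\<^sub>1 s\<^sub>2) = 0\<close>.
\<close>

text \<open>\<open>cheb c (n + 1)\<close> is the Chebyshev polynomial of the second kind \<open>U_n(c)\<close>.\<close>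

fun cheb :: "real \<Rightarrow> nat \<Rightarrow> real" where
  "cheb c 0 = 0"
| "cheb c (Suc 0) = 1"
| "cheb c (Suc (Suc n)) = 2 * c * cheb c (Suc n) - cheb c n"

definition cheb_root :: "real \<Rightarrow> real" where
  "cheb_root c = c + sqrt (c\<^sup>2 - 1)"

definition cheb_ratio :: "real \<Rightarrow> nat \<Rightarrow> real" where
  "cheb_ratio c m = cheb c (Suc m) / cheb c m"

lemma cheb_root_ge_1: "1 \<le> c \<Longrightarrow> 1 \<le> cheb_root c"
  unfolding cheb_root_def by (smt (verit) real_sqrt_ge_zero one_le_power)

lemma cheb_root_gt_1: "1 < c \<Longrightarrow> 1 < cheb_root c"
  unfolding cheb_root_def by (smt (verit) real_sqrt_ge_zero one_le_power)

lemma cheb_root_inverse: assumes "1 \<le> c" shows "1 / cheb_root c = c - sqrt (c\<^sup>2 - 1)"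
proof -
  have "(sqrt (c\<^sup>2 - 1))\<^sup>2 = c\<^sup>2 - 1" using assms by (simp add: one_le_power)
  then have "cheb_root c * (c - sqrt (c\<^sup>2 - 1)) = 1"
    unfolding cheb_root_def by (simp add: algebra_simps power2_eq_square)
  moreover have "cheb_root c \<noteq> 0" using cheb_root_ge_1[OF assms] by simp
  ultimately show ?thesis by (simp add: field_simps)
qed

lemma cheb_root_inverse_le_1: "1 \<le> c \<Longrightarrow> 1 / cheb_root c \<le> 1"
  using cheb_root_ge_1[of c] by (simp add: divide_le_eq_1)

lemma cheb_root_add_inverse: "1 \<le> c \<Longrightarrow> cheb_root c + 1 / cheb_root c = 2 * c"
  using cheb_root_inverse unfolding cheb_root_def by simp

lemma cheb_root_quadratic:
  assumes "1 \<le> c" shows "t\<^sup>2 - 2 * c * t + 1 = (t - cheb_root c) * (t - 1 / cheb_root c)"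
proof -
  have "(t - v) * (t - w) = t\<^sup>2 - t * (v + w) + v * w" for v w :: real
    by (simp add: algebra_simps power2_eq_square)
  then have "(t - cheb_root c) * (t - 1 / cheb_root c)
      = t\<^sup>2 - t * (cheb_root c + 1 / cheb_root c) + cheb_root c * (1 / cheb_root c)" .
  moreover have "cheb_root c * (1 / cheb_root c) = 1" using cheb_root_ge_1[OF assms] by simp
  ultimately show ?thesis using cheb_root_add_inverse[OF assms] by simp
qed

lemma cheb_root_mono: assumes "1 \<le> c" "c \<le> d" shows "cheb_root c \<le> cheb_root d"
proof -
  have "c\<^sup>2 \<le> d\<^sup>2" using assms by (intro power_mono) auto
  then have "sqrt (c\<^sup>2 - 1) \<le> sqrt (d\<^sup>2 - 1)" by simp
  then show ?thesis unfolding cheb_root_def using assms by linarith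
qed

text \<open>The Casoratian of the solutions \<open>cheb c\<close> and \<open>\<nu>\<^sup>n\<close> of the Chebyshev recurrence.\<close>

lemma cheb_Suc_minus_root:
  assumes "1 \<le> c" shows "(cheb c (Suc n) - cheb_root c * cheb c n) * cheb_root c ^ n = 1"
proof (induction n)
  case 0 then show ?case by simp
next
  case (Suc n)
  let ?v = "cheb_root c"
  have v0: "?v \<noteq> 0" using cheb_root_ge_1[OF assms] by simp
  have "cheb c (Suc (Suc n)) = (?v + 1 / ?v) * cheb c (Suc n) - cheb c n"
    using cheb_root_add_inverse[OF assms] by simp
  then have "(cheb c (Suc (Suc n)) - ?v * cheb c (Suc n)) * ?v ^ Suc n
      = ((1 / ?v) * cheb c (Suc n) - cheb c n) * ?v * ?v ^ n"
    by (simp add: algebra_simps)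
  also have "\<dots> = (cheb c (Suc n) - ?v * cheb c n) * ?v ^ n" using v0 by (simp add: algebra_simps)
  finally show ?case using Suc by simp
qed

lemma cheb_Suc_gt_root_mult:
  assumes "1 \<le> c" shows "cheb_root c * cheb c n < cheb c (Suc n)"
proof -
  have "(cheb c (Suc n) - cheb_root c * cheb c n) * cheb_root c ^ n = 1"
    by (rule cheb_Suc_minus_root[OF assms])
  moreover have "0 < cheb_root c ^ n" using cheb_root_ge_1[OF assms] by simp
  ultimately show ?thesis by (smt (verit) mult_nonpos_nonneg)
qed

lemma cheb_ge_root_power: assumes "1 \<le> c" shows "cheb_root c ^ n \<le> cheb c (Suc n)"
proof (induction n)
  case 0 then show ?case by simp
next
  case (Suc n)
  have "cheb_root c ^ Suc n \<le> cheb_root c * cheb c (Suc n)"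
    using Suc cheb_root_ge_1[OF assms] by simp
  then show ?case using cheb_Suc_gt_root_mult[OF assms, of "Suc n"] by linarith
qed

lemma cheb_pos: "1 \<le> c \<Longrightarrow> 0 < cheb c (Suc n)"
  using cheb_ge_root_power[of c n] cheb_root_ge_1[of c] by (smt (verit) zero_less_power)

lemma cheb_le_Suc: assumes "1 \<le> c" shows "cheb c n \<le> cheb c (Suc n)"
proof -
  have "0 \<le> cheb c n" using cheb_pos[OF assms] by (cases n) (auto intro: less_imp_le)
  then have "cheb c n \<le> cheb_root c * cheb c n"
    using cheb_root_ge_1[OF assms] by (simp add: mult_le_cancel_right1)
  then show ?thesis using cheb_Suc_gt_root_mult[OF assms, of n] by linarith
qed

lemma continuous_on_cheb:
  assumes "continuous_on S f" shows "continuous_on S (\<lambda>x. cheb (f x) n)"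
proof -
  have "continuous_on S (\<lambda>x. cheb (f x) n) \<and> continuous_on S (\<lambda>x. cheb (f x) (Suc n))"
    by (induction n) (use assms in \<open>auto intro!: continuous_intros\<close>)
  then show ?thesis by simp
qed

lemma cheb_ratio_gt_root:
  assumes "1 \<le> c" "1 \<le> m" shows "cheb_root c < cheb_ratio c m"
proof -
  have "0 < cheb c m" using cheb_pos[OF assms(1)] assms(2) by (cases m) auto
  then show ?thesis
    using cheb_Suc_gt_root_mult[OF assms(1), of m] unfolding cheb_ratio_def by (simp add: field_simps)
qed

lemma cheb_ratio_minus_root_le:
  assumes "1 \<le> c" "1 \<le> m"
  shows "cheb_ratio c m - cheb_root c \<le> cheb_root c / cheb_root c ^ (2 * m)"
proof -
  obtain k where m: "m = Suc k" using assms(2) by (cases m) auto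
  let ?v = "cheb_root c"
  have v1: "1 \<le> ?v" using cheb_root_ge_1[OF assms(1)] .
  have p: "0 < cheb c m" using cheb_pos[OF assms(1)] m by simp
  have "cheb_ratio c m - ?v = (1 / ?v ^ m) / cheb c m"
    using cheb_Suc_minus_root[OF assms(1), of m] p v1 unfolding cheb_ratio_def by (simp add: field_simps)
  also have "\<dots> \<le> (1 / ?v ^ m) / ?v ^ k"
    using cheb_ge_root_power[OF assms(1), of k] m v1 p by (intro divide_left_mono) auto
  also have "\<dots> = ?v / ?v ^ (2 * m)"
  proof -
    have "?v ^ (2 * m) = ?v * (?v ^ m * ?v ^ k)" using m by (simp add: power_add[symmetric] mult_2)
    then show ?thesis using v1 by (simp add: field_simps)
  qed
  finally show ?thesis .
qed

text \<open>Monotonicity in \<open>c\<close>: the ratio satisfies \<open>r\<^sub>k\<^sub>+\<^sub>1 = 2c - 1/r\<^sub>k\<close> with \<open>r\<^sub>k > 1\<close>.\<close>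

lemma cheb_ratio_mono:
  assumes "1 \<le> c" "c \<le> d" "1 \<le> m" shows "cheb_ratio c m \<le> cheb_ratio d m"
proof -
  have d1: "1 \<le> d" using assms by simp
  have step: "cheb_ratio e (Suc (Suc k)) = 2 * e - 1 / cheb_ratio e (Suc k)" if "1 \<le> e" for e k
    using cheb_pos[OF that, of k] cheb_pos[OF that, of "Suc k"]
    unfolding cheb_ratio_def by (simp add: field_simps del: cheb.simps) simp
  have "cheb_ratio c (Suc k) \<le> cheb_ratio d (Suc k)" for k
  proof (induction k)
    case 0 then show ?case using assms by (simp add: cheb_ratio_def)
  next
    case (Suc k)
    have "1 < cheb_ratio c (Suc k)"
      using cheb_ratio_gt_root[OF assms(1), of "Suc k"] cheb_root_ge_1[OF assms(1)] by simp
    then have "1 / cheb_ratio d (Suc k) \<le> 1 / cheb_ratio c (Suc k)"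
      using Suc by (intro divide_left_mono) auto
    then show ?case unfolding step[OF assms(1)] step[OF d1] using assms by linarith
  qed
  then show ?thesis using assms(3) by (cases m) auto
qed

lemma divide_power_antimono:
  fixes v w :: real assumes "1 < v" "v \<le> w" "1 \<le> m"
  shows "w / w ^ (2 * m) \<le> v / v ^ (2 * m)"
proof -
  obtain k where k: "2 * m = Suc k" using assms(3) by (cases "2 * m") auto
  have "v ^ k \<le> w ^ k" using assms by (intro power_mono) auto
  then have "w * v ^ (2 * m) \<le> v * w ^ (2 * m)" using assms unfolding k by simp
  moreover have "0 < v ^ (2 * m)" "0 < w ^ (2 * m)" using assms by auto
  ultimately show ?thesis by (simp add: divide_simps)
qed

lemma divide_power_le_exp:
  fixes v :: real assumes "1 < v"
  shows "v / v ^ (2 * m) \<le> v\<^sup>2 * exp (- (ln v / 2) * real (4 * m + 1))"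
proof -
  have "v / v ^ (2 * m) = v powr (1 - 2 * real m)"
    using assms by (simp add: powr_diff powr_realpow[symmetric])
  also have "\<dots> \<le> v powr (2 - real (4 * m + 1) / 2)"
    using assms by (intro powr_mono) (auto simp: field_simps)
  also have "\<dots> = exp (ln v + ln v) * exp (- (ln v / 2) * real (4 * m + 1))"
    using assms unfolding powr_def exp_add[symmetric] by (simp add: algebra_simps)
  also have "exp (ln v + ln v) = v\<^sup>2"
    using assms by (simp only: exp_add) (simp add: power2_eq_square)
  finally show ?thesis .
qed

text \<open>
  In the notation \<open>a = 1/s\<^sub>1\<close>, \<open>b = 1/s\<^sub>2\<close> (so \<open>0 < b < a\<close>): \<open>half_trace a b \<lambda>\<close> is half the
  trace of the transfer matrix over one period of the dimer chain, which exceeds \<open>1\<close> exactly in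
  the gap \<open>(2b, 2a)\<close>; \<open>center_ratio a \<lambda>\<close> is the value the Chebyshev ratio must take for the
  row of the defect to hold.
\<close>

definition half_trace :: "real \<Rightarrow> real \<Rightarrow> real \<Rightarrow> real" where
  "half_trace a b l = (a\<^sup>2 + b\<^sup>2 - (a + b - l)\<^sup>2) / (2 * a * b)"

definition center_ratio :: "real \<Rightarrow> real \<Rightarrow> real" where
  "center_ratio a l = 3 - l / a"

definition limit_quadratic :: "real \<Rightarrow> real \<Rightarrow> real \<Rightarrow> real" where
  "limit_quadratic a b l = l\<^sup>2 - 3 * (a + b) * l + 8 * a * b"

definition lambda_limit :: "real \<Rightarrow> real \<Rightarrow> real" where
  "lambda_limit a b = (3 * a + 3 * b - sqrt (9 * a\<^sup>2 - 14 * a * b + 9 * b\<^sup>2)) / 2"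

locale dimer_gap =
  fixes a b :: real
  assumes b_pos: "0 < b" and b_less_a: "b < a"
begin

lemma a_pos: "0 < a"
  using b_pos b_less_a by simp

lemma half_trace_minus_1: "half_trace a b l - 1 = ((a - b)\<^sup>2 - (a + b - l)\<^sup>2) / (2 * a * b)"
  unfolding half_trace_def using a_pos b_pos by (simp add: field_simps power2_eq_square)

lemma half_trace_ge_1: assumes "2 * b \<le> l" "l \<le> 2 * a" shows "1 \<le> half_trace a b l"
proof -
  have "\<bar>a + b - l\<bar> \<le> \<bar>a - b\<bar>" using assms b_less_a by simp
  then have "(a + b - l)\<^sup>2 \<le> (a - b)\<^sup>2" by (simp add: abs_le_square_iff)
  then have "0 \<le> half_trace a b l - 1" unfolding half_trace_minus_1 using a_pos b_pos by simp
  then show ?thesis by simp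
qed

lemma half_trace_gt_1: assumes "2 * b < l" "l < 2 * a" shows "1 < half_trace a b l"
proof -
  have "\<bar>a + b - l\<bar> < \<bar>a - b\<bar>" using assms b_less_a by simp
  then have "(a + b - l)\<^sup>2 < (a - b)\<^sup>2" by (metis abs_le_square_iff not_le)
  then have "0 < half_trace a b l - 1" unfolding half_trace_minus_1 using a_pos b_pos by simp
  then show ?thesis by simp
qed

lemma half_trace_mono: assumes "l1 \<le> l2" "l2 \<le> a + b" shows "half_trace a b l1 \<le> half_trace a b l2"
proof -
  have "(a + b - l2)\<^sup>2 \<le> (a + b - l1)\<^sup>2" using assms by (intro power_mono) auto
  then show ?thesis unfolding half_trace_def using a_pos b_pos by (simp add: divide_right_mono)
qed

lemma center_ratio_gt_1: "l < 2 * a \<Longrightarrow> 1 < center_ratio a l"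
  unfolding center_ratio_def using a_pos by (simp add: field_simps)

lemma center_ratio_strict_antimono: "l1 < l2 \<Longrightarrow> center_ratio a l2 < center_ratio a l1"
  unfolding center_ratio_def using a_pos by (simp add: divide_strict_right_mono)

text \<open>This identity is where the quadratic defining \<open>\<lambda>\<^sub>*\<close> comes from.\<close>

lemma cheb_quadratic_at_center_ratio:
  "a\<^sup>2 * b * ((center_ratio a l)\<^sup>2 - 2 * half_trace a b l * center_ratio a l + 1)
     = - (l - 2 * a) * limit_quadratic a b l"
  unfolding half_trace_def center_ratio_def limit_quadratic_def using a_pos b_pos
  by (simp add: field_simps power2_eq_square)

lemma limit_quadratic_lambda_limit: "limit_quadratic a b (lambda_limit a b) = 0"
proof -
  have "9 * a\<^sup>2 - 14 * a * b + 9 * b\<^sup>2 = 9 * (a - b)\<^sup>2 + 4 * a * b"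
    by (simp add: algebra_simps power2_eq_square)
  moreover have "0 \<le> 9 * (a - b)\<^sup>2 + 4 * a * b" using a_pos b_pos by simp
  ultimately have "0 \<le> 9 * a\<^sup>2 - 14 * a * b + 9 * b\<^sup>2" by linarith
  then have s: "(sqrt (9 * a\<^sup>2 - 14 * a * b + 9 * b\<^sup>2))\<^sup>2 = 9 * a\<^sup>2 - 14 * a * b + 9 * b\<^sup>2" by simp
  show ?thesis unfolding limit_quadratic_def lambda_limit_def
    by (simp add: field_simps power2_eq_square) (use s in \<open>simp add: algebra_simps power2_eq_square\<close>)
qed

lemma lambda_limit_bounds: "2 * b < lambda_limit a b" "lambda_limit a b < a + b"
proof -
  let ?D = "9 * a\<^sup>2 - 14 * a * b + 9 * b\<^sup>2"
  have "?D < (3 * a - b)\<^sup>2" using a_pos b_pos b_less_a by (simp add: power2_eq_square algebra_simps)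
  then have "sqrt ?D < 3 * a - b" using b_less_a b_pos by (intro real_less_lsqrt) auto
  then show "2 * b < lambda_limit a b" unfolding lambda_limit_def by simp
  have "?D - (a + b)\<^sup>2 = 8 * (a - b)\<^sup>2" by (simp add: power2_eq_square algebra_simps)
  moreover have "0 < (a - b)\<^sup>2" using b_less_a by simp
  ultimately have "(a + b)\<^sup>2 < ?D" by linarith
  then have "a + b < sqrt ?D" using a_pos b_pos by (simp add: real_less_rsqrt)
  then show "lambda_limit a b < a + b" unfolding lambda_limit_def by simp
qed

lemma limit_quadratic_factor:
  "limit_quadratic a b l = (l - lambda_limit a b) * (l - (3 * (a + b) - lambda_limit a b))"
proof -
  have "limit_quadratic a b l - limit_quadratic a b (lambda_limit a b)
      = (l - lambda_limit a b) * (l - (3 * (a + b) - lambda_limit a b))"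
    unfolding limit_quadratic_def by (simp add: algebra_simps power2_eq_square)
  then show ?thesis using limit_quadratic_lambda_limit by simp
qed

lemma limit_quadratic_neg: assumes "a + b \<le> l" "l \<le> 2 * a" shows "limit_quadratic a b l < 0"
proof -
  have e: "limit_quadratic a b l = (l - (a + b)) * (l - 2 * a) + (- 2 * b * l + 6 * a * b - 2 * a\<^sup>2)"
    unfolding limit_quadratic_def by (simp add: algebra_simps power2_eq_square)
  have "(l - (a + b)) * (l - 2 * a) \<le> 0" using assms by (simp add: mult_nonneg_nonpos)
  moreover have "b * (a + b) \<le> b * l" using assms b_pos by simp
  moreover have "0 < (a - b)\<^sup>2" using b_less_a by simp
  moreover have "(a - b)\<^sup>2 = a\<^sup>2 - 2 * a * b + b\<^sup>2" by (simp add: algebra_simps power2_eq_square)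
  ultimately show ?thesis unfolding e by (simp add: algebra_simps power2_eq_square)
qed

lemma center_ratio_less_cheb_root:
  assumes "a + b \<le> l" "l < 2 * a" shows "center_ratio a l < cheb_root (half_trace a b l)"
proof -
  have c1: "1 \<le> half_trace a b l" using assms b_less_a by (intro half_trace_ge_1) auto
  have "- (l - 2 * a) * limit_quadratic a b l < 0"
    using limit_quadratic_neg[of l] assms by (simp add: mult_pos_neg)
  then have "a\<^sup>2 * b * ((center_ratio a l)\<^sup>2 - 2 * half_trace a b l * center_ratio a l + 1) < 0"
    using cheb_quadratic_at_center_ratio by simp
  moreover have "0 < a\<^sup>2 * b" using a_pos b_pos by simp
  ultimately have "(center_ratio a l)\<^sup>2 - 2 * half_trace a b l * center_ratio a l + 1 < 0"
    using b_pos by (auto simp add: mult_less_0_iff)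
  then have "(center_ratio a l - cheb_root (half_trace a b l))
      * (center_ratio a l - 1 / cheb_root (half_trace a b l)) < 0"
    using cheb_root_quadratic[OF c1] by simp
  moreover have "0 < center_ratio a l - 1 / cheb_root (half_trace a b l)"
    using center_ratio_gt_1[OF assms(2)] cheb_root_inverse_le_1[OF c1] by simp
  ultimately show ?thesis by (simp add: mult_less_0_iff)
qed

lemma cheb_root_lambda_limit:
  "cheb_root (half_trace a b (lambda_limit a b)) = center_ratio a (lambda_limit a b)"
proof -
  let ?l = "lambda_limit a b"
  have c1: "1 \<le> half_trace a b ?l" using lambda_limit_bounds b_less_a by (intro half_trace_ge_1) auto
  have "(center_ratio a ?l)\<^sup>2 - 2 * half_trace a b ?l * center_ratio a ?l + 1 = 0"
    using cheb_quadratic_at_center_ratio[of ?l] limit_quadratic_lambda_limit a_pos b_pos by simp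
  then have "(center_ratio a ?l - cheb_root (half_trace a b ?l))
      * (center_ratio a ?l - 1 / cheb_root (half_trace a b ?l)) = 0"
    using cheb_root_quadratic[OF c1] by simp
  moreover have "0 < center_ratio a ?l - 1 / cheb_root (half_trace a b ?l)"
    using center_ratio_gt_1[of ?l] lambda_limit_bounds b_less_a cheb_root_inverse_le_1[OF c1] by simp
  ultimately show ?thesis by simp
qed

lemma cheb_root_less_center_ratio:
  assumes "2 * b < l" "l < lambda_limit a b" shows "cheb_root (half_trace a b l) < center_ratio a l"
proof -
  have lb: "l < a + b" using assms lambda_limit_bounds by simp
  have c1: "1 \<le> half_trace a b l" using assms lb b_less_a by (intro half_trace_ge_1) auto
  have "0 < limit_quadratic a b l"
    unfolding limit_quadratic_factor using assms lambda_limit_bounds a_pos b_pos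
    by (intro mult_neg_neg) auto
  then have "0 < a\<^sup>2 * b * ((center_ratio a l)\<^sup>2 - 2 * half_trace a b l * center_ratio a l + 1)"
    using cheb_quadratic_at_center_ratio lb b_less_a by simp
  moreover have "0 < a\<^sup>2 * b" using a_pos b_pos by simp
  ultimately have "0 < (center_ratio a l)\<^sup>2 - 2 * half_trace a b l * center_ratio a l + 1"
    by (auto simp add: zero_less_mult_iff)
  then have "0 < (center_ratio a l - cheb_root (half_trace a b l))
      * (center_ratio a l - 1 / cheb_root (half_trace a b l))"
    using cheb_root_quadratic[OF c1] by simp
  moreover have "0 < center_ratio a l - 1 / cheb_root (half_trace a b l)"
    using center_ratio_gt_1[of l] lb b_less_a cheb_root_inverse_le_1[OF c1] by simp
  ultimately show ?thesis by (simp add: zero_less_mult_iff)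
qed

text \<open>
  The defect condition for a chain with \<open>4m + 1\<close> resonators is \<open>ratio m \<lambda> = center_ratio a \<lambda>\<close>.
\<close>

abbreviation ratio where
  "ratio m l \<equiv> cheb_ratio (half_trace a b l) m"

lemma cheb_root_less_ratio:
  "1 \<le> m \<Longrightarrow> 2 * b \<le> l \<Longrightarrow> l \<le> 2 * a \<Longrightarrow> cheb_root (half_trace a b l) < ratio m l"
  by (intro cheb_ratio_gt_root half_trace_ge_1)

lemma ratio_mono:
  assumes "1 \<le> m" "2 * b \<le> l1" "l1 \<le> l2" "l2 \<le> a + b" shows "ratio m l1 \<le> ratio m l2"
  using assms b_less_a by (intro cheb_ratio_mono half_trace_ge_1 half_trace_mono) auto

lemma center_ratio_less_ratio:
  assumes "1 \<le> m" "lambda_limit a b < l" "l < 2 * a" shows "center_ratio a l < ratio m l"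
proof (cases "a + b \<le> l")
  case True
  then show ?thesis
    using center_ratio_less_cheb_root cheb_root_less_ratio[of m l] assms b_pos by fastforce
next
  case False
  have "center_ratio a l < center_ratio a (lambda_limit a b)"
    using assms(2) by (rule center_ratio_strict_antimono)
  also have "\<dots> = cheb_root (half_trace a b (lambda_limit a b))"
    by (rule cheb_root_lambda_limit[symmetric])
  also have "\<dots> \<le> cheb_root (half_trace a b l)"
    using assms False lambda_limit_bounds b_less_a
    by (intro cheb_root_mono half_trace_ge_1 half_trace_mono) auto
  also have "\<dots> < ratio m l"
    using assms lambda_limit_bounds by (intro cheb_root_less_ratio) auto
  finally show ?thesis .
qed

lemma ratio_root_le_lambda_limit:
  "1 \<le> m \<Longrightarrow> l < 2 * a \<Longrightarrow> ratio m l = center_ratio a l \<Longrightarrow> l \<le> lambda_limit a b"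
  using center_ratio_less_ratio[of m l] by fastforce

lemma ratio_root_unique:
  assumes "1 \<le> m"
    and "2 * b < l1" "l1 < 2 * a" "ratio m l1 = center_ratio a l1"
    and "2 * b < l2" "l2 < 2 * a" "ratio m l2 = center_ratio a l2"
  shows "l1 = l2"
proof -
  have not_less: "\<not> l < l'"
    if "2 * b < l" "ratio m l = center_ratio a l" "l' < 2 * a" "ratio m l' = center_ratio a l'" for l l'
  proof
    assume "l < l'"
    have "l' \<le> lambda_limit a b" using ratio_root_le_lambda_limit assms(1) that(3,4) .
    then have "ratio m l \<le> ratio m l'"
      using assms(1) that(1) \<open>l < l'\<close> lambda_limit_bounds by (intro ratio_mono) auto
    moreover have "center_ratio a l' < center_ratio a l"
      using \<open>l < l'\<close> by (rule center_ratio_strict_antimono)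
    ultimately show False using that by simp
  qed
  show ?thesis using not_less[of l1 l2] not_less[of l2 l1] assms by fastforce
qed

lemma ratio_root_gt:
  assumes "1 \<le> m" "2 * b < l0" "l0 \<le> a + b" "ratio m l0 < center_ratio a l0"
    and "2 * b < l" "l < 2 * a" "ratio m l = center_ratio a l"
  shows "l0 < l"
proof (rule ccontr)
  assume "\<not> l0 < l"
  then have "ratio m l \<le> ratio m l0"
    using assms ratio_root_le_lambda_limit[of m l] by (intro ratio_mono) auto
  moreover have "center_ratio a l0 \<le> center_ratio a l"
    using \<open>\<not> l0 < l\<close> center_ratio_strict_antimono[of l l0] by fastforce
  ultimately show False using assms by simp
qed

lemma ratio_root_exists:
  assumes "1 \<le> m" "2 * b < l0" "l0 \<le> a + b" "ratio m l0 \<le> center_ratio a l0"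
  shows "\<exists>l. l0 \<le> l \<and> l \<le> a + b \<and> ratio m l = center_ratio a l"
proof -
  have ht_ge_1: "1 \<le> half_trace a b l" if "l \<in> {l0..a + b}" for l
    using that assms b_less_a by (intro half_trace_ge_1) auto
  have "continuous_on {l0..a + b} (half_trace a b)"
    unfolding half_trace_def using a_pos b_pos by (intro continuous_intros) auto
  moreover have "\<forall>l\<in>{l0..a + b}. cheb (half_trace a b l) m \<noteq> 0"
  proof
    fix l assume "l \<in> {l0..a + b}"
    then have "0 < cheb (half_trace a b l) (Suc (m - 1))" using ht_ge_1 cheb_pos by blast
    then show "cheb (half_trace a b l) m \<noteq> 0" using assms(1) by simp
  qed
  ultimately have "continuous_on {l0..a + b} (\<lambda>l. ratio m l - center_ratio a l)"
    unfolding cheb_ratio_def center_ratio_def using a_pos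
    by (intro continuous_on_diff continuous_on_divide continuous_on_cheb continuous_intros) auto
  moreover have "0 \<le> ratio m (a + b) - center_ratio a (a + b)"
    using center_ratio_less_ratio[of m "a + b"] assms(1) lambda_limit_bounds b_less_a by simp
  ultimately obtain l where "l0 \<le> l" "l \<le> a + b" "ratio m l - center_ratio a l = 0"
    using IVT'[of "\<lambda>l. ratio m l - center_ratio a l" l0 0 "a + b"] assms(3,4) by auto
  then show ?thesis by auto
qed

text \<open>
  At a root \<open>\<lambda> \<le> \<lambda>\<^sub>*\<close> one has \<open>\<lambda>\<^sub>* - \<lambda> \<le> a (ratio - \<nu>)\<close>, and the bound on \<open>ratio - \<nu>\<close> decreases
  in \<open>\<nu>\<close>, so it may be evaluated at any \<open>l0 \<le> \<lambda>\<close>.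
\<close>

lemma lambda_limit_minus_root_le:
  assumes "1 \<le> m" "2 * b < l0" "l0 \<le> l" "l < 2 * a" "ratio m l = center_ratio a l"
  shows "\<bar>l - lambda_limit a b\<bar>
           \<le> a * (cheb_root (half_trace a b l0) / cheb_root (half_trace a b l0) ^ (2 * m))"
proof -
  let ?\<nu> = "\<lambda>l. cheb_root (half_trace a b l)"
  have l_le: "l \<le> lambda_limit a b" using ratio_root_le_lambda_limit assms(1,4,5) .
  have c: "1 \<le> half_trace a b l" using assms l_le lambda_limit_bounds b_less_a
    by (intro half_trace_ge_1) auto
  have "1 < half_trace a b l0" using assms l_le lambda_limit_bounds by (intro half_trace_gt_1) auto
  then have \<nu>0: "1 < ?\<nu> l0" by (rule cheb_root_gt_1)
  have "?\<nu> l0 \<le> ?\<nu> l" using assms l_le lambda_limit_bounds b_less_a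
    by (intro cheb_root_mono half_trace_ge_1 half_trace_mono) auto
  have "?\<nu> l \<le> ?\<nu> (lambda_limit a b)" using assms l_le lambda_limit_bounds b_less_a
    by (intro cheb_root_mono half_trace_ge_1 half_trace_mono) auto
  then have "a * ?\<nu> l \<le> a * center_ratio a (lambda_limit a b)"
    unfolding cheb_root_lambda_limit using a_pos by simp
  moreover have "a * center_ratio a x = 3 * a - x" for x
    unfolding center_ratio_def using a_pos by (simp add: field_simps)
  ultimately have "lambda_limit a b - l \<le> a * (center_ratio a l - ?\<nu> l)"
    by (simp add: right_diff_distrib)
  also have "center_ratio a l - ?\<nu> l \<le> ?\<nu> l / ?\<nu> l ^ (2 * m)"
    using cheb_ratio_minus_root_le[OF c assms(1)] assms(5) by simp
  also have "\<dots> \<le> ?\<nu> l0 / ?\<nu> l0 ^ (2 * m)"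
    using \<nu>0 \<open>?\<nu> l0 \<le> ?\<nu> l\<close> assms(1) by (rule divide_power_antimono)
  finally show ?thesis using l_le a_pos by (simp add: mult_left_mono)
qed

lemma ratio_root_ex1_error_bound:
  assumes m: "1 \<le> m" and l0: "2 * b < l0" "l0 \<le> a + b" and below: "ratio m l0 < center_ratio a l0"
  shows "(\<exists>!l. 2 * b < l \<and> l < 2 * a \<and> ratio m l = center_ratio a l) \<and>
    (\<forall>l. 2 * b < l \<and> l < 2 * a \<and> ratio m l = center_ratio a l \<longrightarrow> \<bar>l - lambda_limit a b\<bar>
       \<le> a * (cheb_root (half_trace a b l0) / cheb_root (half_trace a b l0) ^ (2 * m)))"
proof
  obtain l1 where "l0 \<le> l1" "l1 \<le> a + b" "ratio m l1 = center_ratio a l1"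
    using ratio_root_exists[OF m l0] below by fastforce
  then show "\<exists>!l. 2 * b < l \<and> l < 2 * a \<and> ratio m l = center_ratio a l"
    using l0 b_less_a ratio_root_unique[OF m] by (intro ex1I[of _ l1]) auto
  show "\<forall>l. 2 * b < l \<and> l < 2 * a \<and> ratio m l = center_ratio a l \<longrightarrow> \<bar>l - lambda_limit a b\<bar>
       \<le> a * (cheb_root (half_trace a b l0) / cheb_root (half_trace a b l0) ^ (2 * m))"
    using ratio_root_gt[OF m l0 below] lambda_limit_minus_root_le[OF m l0(1)] by (simp add: less_imp_le)
qed

theorem ratio_root_asymptotics:
  "\<exists>M\<ge>1. \<exists>A>0. \<exists>B>0. \<forall>m\<ge>M.
     (\<exists>!l. 2 * b < l \<and> l < 2 * a \<and> ratio m l = center_ratio a l) \<and>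
     (\<forall>l. 2 * b < l \<and> l < 2 * a \<and> ratio m l = center_ratio a l \<longrightarrow>
        \<bar>l - lambda_limit a b\<bar> < A * exp (- B * real (4 * m + 1)))"
proof -
  define l0 where "l0 = (2 * b + lambda_limit a b) / 2"
  have l0: "2 * b < l0" "l0 < lambda_limit a b" "l0 \<le> a + b"
    using lambda_limit_bounds unfolding l0_def by auto
  define \<nu>0 where "\<nu>0 = cheb_root (half_trace a b l0)"
  have \<nu>0: "1 < \<nu>0"
    unfolding \<nu>0_def using l0 lambda_limit_bounds b_less_a by (intro cheb_root_gt_1 half_trace_gt_1) auto
  have gap: "0 < center_ratio a l0 - \<nu>0"
    unfolding \<nu>0_def using cheb_root_less_center_ratio[OF l0(1,2)] by simp
  obtain n where n: "\<nu>0 / (center_ratio a l0 - \<nu>0) < \<nu>0 ^ n" using real_arch_pow[OF \<nu>0] by blast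
  define A where "A = 2 * a * \<nu>0\<^sup>2"
  define B where "B = ln \<nu>0 / 2"
  have A: "0 < A" and B: "0 < B" unfolding A_def B_def using a_pos \<nu>0 by auto
  have below: "ratio m l0 < center_ratio a l0" if "Suc n \<le> m" for m
  proof -
    have "\<nu>0 ^ n \<le> \<nu>0 ^ (2 * m)" using that \<nu>0 by (intro power_increasing) auto
    then have "\<nu>0 / (center_ratio a l0 - \<nu>0) < \<nu>0 ^ (2 * m)" using n by simp
    then have "\<nu>0 / \<nu>0 ^ (2 * m) < center_ratio a l0 - \<nu>0"
      using gap \<nu>0 by (simp add: field_simps)
    moreover have "ratio m l0 - \<nu>0 \<le> \<nu>0 / \<nu>0 ^ (2 * m)"
      unfolding \<nu>0_def using l0 lambda_limit_bounds b_less_a that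
      by (intro cheb_ratio_minus_root_le half_trace_ge_1) auto
    ultimately show ?thesis by simp
  qed
  have decay: "a * (\<nu>0 / \<nu>0 ^ (2 * m)) < A * exp (- B * real (4 * m + 1))" for m
  proof -
    have "a * (\<nu>0 / \<nu>0 ^ (2 * m)) \<le> a * (\<nu>0\<^sup>2 * exp (- B * real (4 * m + 1)))"
      unfolding B_def using divide_power_le_exp[OF \<nu>0] a_pos by (intro mult_left_mono) auto
    also have "\<dots> < A * exp (- B * real (4 * m + 1))"
      unfolding A_def using a_pos \<nu>0 by simp
    finally show ?thesis .
  qed
  have "(\<exists>!l. 2 * b < l \<and> l < 2 * a \<and> ratio m l = center_ratio a l) \<and>
     (\<forall>l. 2 * b < l \<and> l < 2 * a \<and> ratio m l = center_ratio a l \<longrightarrow>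
        \<bar>l - lambda_limit a b\<bar> < A * exp (- B * real (4 * m + 1)))" if m: "Suc n \<le> m" for m
  proof -
    have "1 \<le> m" using m by simp
    from ratio_root_ex1_error_bound[OF this l0(1,3) below[OF m], folded \<nu>0_def]
    show ?thesis using decay[of m] by (blast intro: order_le_less_trans)
  qed
  then show ?thesis using A B by (intro exI[of _ "Suc n"] conjI exI[of _ A] exI[of _ B]) auto
qed

end

text \<open>
  \<open>left_solution a b \<lambda>\<close> solves the rows \<open>0, \<dots>, 2m - 1\<close> of \<open>(C_N - \<lambda>) v = 0\<close> for \<open>v\<^sub>1, \<dots>, v\<^sub>2\<^sub>m\<close>,
  normalised by \<open>v\<^sub>0 = 1\<close> (indices are 0-based, \<open>a = 1/s\<^sub>1\<close>, \<open>b = 1/s\<^sub>2\<close>).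
\<close>

fun left_solution :: "real \<Rightarrow> real \<Rightarrow> real \<Rightarrow> nat \<Rightarrow> real" where
  "left_solution a b l 0 = 1"
| "left_solution a b l (Suc 0) = (a - l) / a"
| "left_solution a b l (Suc (Suc i)) =
     (if even i then ((a + b - l) * left_solution a b l (Suc i) - a * left_solution a b l i) / b
      else ((a + b - l) * left_solution a b l (Suc i) - b * left_solution a b l i) / a)"

text \<open>The residual of the defect row for the even extension of \<open>left_solution\<close> to the whole chain.\<close>

definition center_residual :: "real \<Rightarrow> real \<Rightarrow> real \<Rightarrow> nat \<Rightarrow> real" where
  "center_residual a b l m =
     - 2 * b * left_solution a b l (2 * m - 1) + (2 * b - l) * left_solution a b l (2 * m)"

lemma left_solution_closed_form:
  fixes a b l :: real
  assumes "a \<noteq> 0" "b \<noteq> 0"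
  defines "x \<equiv> a + b - l" and "E \<equiv> (a\<^sup>2 + b * (a + b - l) - (a + b - l)\<^sup>2) / (a * b)" and "U \<equiv> cheb (half_trace a b l)"
  shows "left_solution a b l (2 * j + 1) = (-1) ^ (j + 1) * ((b - x) / a * U (j + 1) - U j)
       \<and> left_solution a b l (2 * j + 2) = (-1) ^ (j + 1) * (E * U (j + 1) - U j)"
proof (induction j)
  case 0
  show ?case unfolding x_def E_def U_def using assms by (simp add: field_simps power2_eq_square)
next
  case (Suc j)
  let ?p = "left_solution a b l" and ?c = "half_trace a b l" and ?s = "(-1::real) ^ (j + 1)"
  have U: "U (Suc j + 1) = 2 * ?c * U (j + 1) - U j" unfolding U_def by simp
  have odd_id: "x * (E * Y - X) - b * ((b - x) / a * Y - X) = - a * ((b - x) / a * (2 * ?c * Y - X) - Y)"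
    for X Y unfolding x_def E_def half_trace_def using assms by (simp add: field_simps power2_eq_square)
  have even_id: "x * ((b - x) / a * (2 * ?c * Y - X) - Y) + a * (E * Y - X) = b * (E * (2 * ?c * Y - X) - Y)"
    for X Y unfolding x_def E_def half_trace_def using assms by (simp add: field_simps power2_eq_square)
  have "?p (2 * Suc j + 1) = (x * ?p (2 * j + 2) - b * ?p (2 * j + 1)) / a"
    unfolding x_def by (simp del: left_solution.simps add: left_solution.simps(3)[of _ _ _ "2 * j + 1", simplified])
  also have "\<dots> = ?s * (x * (E * U (j + 1) - U j) - b * ((b - x) / a * U (j + 1) - U j)) / a"
    unfolding conjunct1[OF Suc.IH] conjunct2[OF Suc.IH] by (simp add: algebra_simps)
  also have "\<dots> = (-1) ^ (Suc j + 1) * ((b - x) / a * U (Suc j + 1) - U (Suc j))"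
    unfolding odd_id U using assms(1) by simp
  finally have odd: "?p (2 * Suc j + 1) = (-1) ^ (Suc j + 1) * ((b - x) / a * U (Suc j + 1) - U (Suc j))" .
  have "?p (2 * Suc j + 2) = (x * ?p (2 * Suc j + 1) - a * ?p (2 * j + 2)) / b"
    unfolding x_def by (simp del: left_solution.simps add: left_solution.simps(3)[of _ _ _ "2 * j + 2", simplified])
  also have "\<dots> = - ?s * (x * ((b - x) / a * (2 * ?c * U (j + 1) - U j) - U (j + 1)) + a * (E * U (j + 1) - U j)) / b"
    unfolding odd U conjunct2[OF Suc.IH] by (simp add: algebra_simps)
  also have "\<dots> = (-1) ^ (Suc j + 1) * (E * U (Suc j + 1) - U (Suc j))"
    unfolding even_id U using assms(2) by simp
  finally show ?case using odd by blast
qed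

lemma center_residual_cheb:
  fixes a b l :: real
  assumes "a \<noteq> 0" "b \<noteq> 0"
  defines "U \<equiv> cheb (half_trace a b l)"
  shows "center_residual a b l (Suc k) = (-1) ^ (k + 1) * (l / a) * ((3 * a - l) * U (k + 1) - a * U (k + 2))"
proof -
  let ?c = "half_trace a b l" and ?E = "(a\<^sup>2 + b * (a + b - l) - (a + b - l)\<^sup>2) / (a * b)"
  have id: "- 2 * b * ((b - (a + b - l)) / a * Y - X) + (2 * b - l) * (?E * Y - X)
      = (l / a) * ((3 * a - l) * Y - a * (2 * ?c * Y - X))" for X Y
    unfolding half_trace_def using assms by (simp add: field_simps power2_eq_square)
  have idx: "2 * Suc k = 2 * k + 2" "2 * k + 2 - 1 = 2 * k + 1" by simp_all
  note closed = left_solution_closed_form[OF assms(1,2), of l k, folded U_def]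
  have "center_residual a b l (Suc k) = (-1) ^ (k + 1)
      * (- 2 * b * ((b - (a + b - l)) / a * U (k + 1) - U k) + (2 * b - l) * (?E * U (k + 1) - U k))"
    unfolding center_residual_def idx conjunct1[OF closed] conjunct2[OF closed]
    by (simp add: algebra_simps del: left_solution.simps)
  also have "\<dots> = (-1) ^ (k + 1) * (l / a) * ((3 * a - l) * U (k + 1) - a * U (k + 2))"
    unfolding id U_def by (simp add: numeral_2_eq_2)
  finally show ?thesis .
qed

context dimer_gap
begin

lemma left_solution_even_ne_0:
  assumes "2 * b < l" "l < 2 * a" shows "left_solution a b l (2 * m) \<noteq> 0"
proof (cases m)
  case (Suc k)
  let ?x = "a + b - l" and ?c = "half_trace a b l"
  let ?E = "(a\<^sup>2 + b * (a + b - l) - (a + b - l)\<^sup>2) / (a * b)"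
  have "a\<^sup>2 + b * ?x - ?x\<^sup>2 - a * b = (a - ?x) * (a + ?x - b)"
    by (simp add: algebra_simps power2_eq_square)
  moreover have "0 < (a - ?x) * (a + ?x - b)" using assms b_less_a b_pos by (intro mult_pos_pos) auto
  ultimately have "a * b < a\<^sup>2 + b * ?x - ?x\<^sup>2" by simp
  then have "1 < ?E" using a_pos b_pos by (simp add: field_simps)
  moreover have c: "1 \<le> ?c" using assms by (intro half_trace_ge_1) auto
  ultimately have "1 * cheb ?c (k + 1) < ?E * cheb ?c (k + 1)"
    using cheb_pos[OF c, of k] by (intro mult_strict_right_mono) auto
  then have "0 < ?E * cheb ?c (k + 1) - cheb ?c k" using cheb_le_Suc[OF c, of k] by simp
  moreover have "left_solution a b l (2 * m) = (-1) ^ (k + 1) * (?E * cheb ?c (k + 1) - cheb ?c k)"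
    using conjunct2[OF left_solution_closed_form[of a b l k]] a_pos b_pos Suc
    by (simp del: left_solution.simps)
  ultimately show ?thesis by (simp del: left_solution.simps)
qed simp

lemma ratio_eq_center_ratio_iff:
  assumes "1 \<le> m" "2 * b < l" "l < 2 * a"
  shows "ratio m l = center_ratio a l \<longleftrightarrow> center_residual a b l m = 0"
proof -
  obtain k where m: "m = Suc k" using assms(1) by (cases m) auto
  let ?U = "cheb (half_trace a b l)"
  have "0 < ?U (Suc k)" using assms by (intro cheb_pos half_trace_ge_1) auto
  then have "ratio m l = center_ratio a l \<longleftrightarrow> (3 * a - l) * ?U (k + 1) - a * ?U (k + 2) = 0"
    unfolding m cheb_ratio_def center_ratio_def using a_pos by (auto simp add: field_simps simp del: cheb.simps)
  also have "\<dots> \<longleftrightarrow> center_residual a b l m = 0"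
    using center_residual_cheb[of a b l k] a_pos b_pos assms unfolding m by simp
  finally show ?thesis .
qed

end

text \<open>
  \<open>cap_coeff\<close> are the 0-based entries of \<open>C_N\<close> as stored in \<open>cap_mat\<close>; \<open>cap_offdiag s1 s2 m k\<close>
  is the entry coupling the 0-based indices \<open>k - 1\<close> and \<open>k\<close>.
\<close>

definition cap_coeff :: "real \<Rightarrow> real \<Rightarrow> nat \<Rightarrow> nat \<Rightarrow> nat \<Rightarrow> real" where
  "cap_coeff s1 s2 m i j = cap_entry s1 s2 m (i + 1) (j + 1)"

definition cap_offdiag :: "real \<Rightarrow> real \<Rightarrow> nat \<Rightarrow> nat \<Rightarrow> real" where
  "cap_offdiag s1 s2 m k =
     (if k \<le> 2 * m then (if odd k then - (1 / s1) else - (1 / s2))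
      else (if odd k then - (1 / s2) else - (1 / s1)))"

definition cap_apply :: "real \<Rightarrow> real \<Rightarrow> nat \<Rightarrow> (nat \<Rightarrow> real) \<Rightarrow> nat \<Rightarrow> real" where
  "cap_apply s1 s2 m v i = (\<Sum>j<4 * m + 1. cap_coeff s1 s2 m i j * v j)"

lemma cap_coeff_eq_0: "j \<noteq> i \<Longrightarrow> j \<noteq> i + 1 \<Longrightarrow> i \<noteq> j + 1 \<Longrightarrow> cap_coeff s1 s2 m i j = 0"
  unfolding cap_coeff_def cap_entry_def Let_def by auto

lemma cap_coeff_diag:
  "cap_coeff s1 s2 m i i =
     (if i = 0 \<or> i = 4 * m then 1 / s1 else if i = 2 * m then 2 / s2 else 1 / s1 + 1 / s2)"
  unfolding cap_coeff_def cap_entry_def Let_def by auto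

lemma cap_coeff_super: "cap_coeff s1 s2 m i (i + 1) = cap_offdiag s1 s2 m (i + 1)"
  unfolding cap_coeff_def cap_entry_def Let_def cap_offdiag_def by auto

lemma cap_coeff_sub: "cap_coeff s1 s2 m (i + 1) i = cap_offdiag s1 s2 m (i + 1)"
  unfolding cap_coeff_def cap_entry_def Let_def cap_offdiag_def by auto

lemma cap_offdiag_mirror:
  assumes "1 \<le> k" "k \<le> 4 * m" shows "cap_offdiag s1 s2 m (4 * m + 1 - k) = cap_offdiag s1 s2 m k"
proof -
  have "odd (4 * m + 1 - k) \<longleftrightarrow> even k" using assms by presburger
  moreover have "4 * m + 1 - k \<le> 2 * m \<longleftrightarrow> \<not> k \<le> 2 * m" using assms by auto
  ultimately show ?thesis unfolding cap_offdiag_def by auto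
qed

lemma cap_coeff_mirror:
  assumes "i < 4 * m + 1" "j < 4 * m + 1"
  shows "cap_coeff s1 s2 m (4 * m - i) (4 * m - j) = cap_coeff s1 s2 m i j"
proof -
  consider "j = i" | "j = i + 1" | "i = j + 1" | "j \<noteq> i \<and> j \<noteq> i + 1 \<and> i \<noteq> j + 1" by auto
  then show ?thesis
  proof cases
    case 1
    then show ?thesis using assms by (auto simp add: cap_coeff_diag)
  next
    case 2
    then have "4 * m - i = (4 * m - j) + 1" using assms by auto
    then have "cap_coeff s1 s2 m (4 * m - i) (4 * m - j) = cap_offdiag s1 s2 m (4 * m - j + 1)"
      using cap_coeff_sub by metis
    also have "4 * m - j + 1 = 4 * m + 1 - (i + 1)" using 2 assms by auto
    also have "cap_offdiag s1 s2 m \<dots> = cap_offdiag s1 s2 m (i + 1)" using assms 2 by (intro cap_offdiag_mirror) auto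
    finally show ?thesis using 2 cap_coeff_super by simp
  next
    case 3
    then have "4 * m - j = (4 * m - i) + 1" using assms by auto
    then have "cap_coeff s1 s2 m (4 * m - i) (4 * m - j) = cap_offdiag s1 s2 m (4 * m - i + 1)"
      using cap_coeff_super by metis
    also have "4 * m - i + 1 = 4 * m + 1 - (j + 1)" using 3 assms by auto
    also have "cap_offdiag s1 s2 m \<dots> = cap_offdiag s1 s2 m (j + 1)" using assms 3 by (intro cap_offdiag_mirror) auto
    finally show ?thesis using 3 cap_coeff_sub by simp
  next
    case 4
    then have "cap_coeff s1 s2 m i j = 0" by (intro cap_coeff_eq_0) auto
    moreover have "cap_coeff s1 s2 m (4 * m - i) (4 * m - j) = 0"
      using 4 assms by (intro cap_coeff_eq_0) auto
    ultimately show ?thesis by simp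
  qed
qed

lemma cap_apply_tridiag:
  assumes "i < 4 * m + 1"
  shows "cap_apply s1 s2 m v i =
    (if i = 0 then 0 else cap_coeff s1 s2 m i (i - 1) * v (i - 1)) + cap_coeff s1 s2 m i i * v i
    + (if i + 1 < 4 * m + 1 then cap_coeff s1 s2 m i (i + 1) * v (i + 1) else 0)"
proof -
  let ?N = "4 * m + 1" and ?f = "\<lambda>j. cap_coeff s1 s2 m i j * v j"
  let ?S = "{j. j < ?N \<and> (j + 1 = i \<or> j = i \<or> j = i + 1)}"
  have "cap_apply s1 s2 m v i = (\<Sum>j\<in>?S. ?f j)"
    unfolding cap_apply_def by (rule sum.mono_neutral_right) (auto intro: cap_coeff_eq_0)
  also have "?S = (if i = 0 then {} else {i - 1}) \<union> {i} \<union> (if i + 1 < ?N then {i + 1} else {})"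
    using assms by auto
  also have "(\<Sum>j\<in>\<dots>. ?f j) = (if i = 0 then 0 else ?f (i - 1)) + ?f i + (if i + 1 < ?N then ?f (i + 1) else 0)"
    by (cases "i = 0"; cases "i + 1 < ?N") auto
  finally show ?thesis .
qed

lemma cap_apply_cong:
  "(\<And>j. j < 4 * m + 1 \<Longrightarrow> v j = w j) \<Longrightarrow> cap_apply s1 s2 m v i = cap_apply s1 s2 m w i"
  unfolding cap_apply_def by (intro sum.cong) auto

lemma cap_apply_scale: "cap_apply s1 s2 m (\<lambda>j. c * v j) i = c * cap_apply s1 s2 m v i"
  unfolding cap_apply_def by (simp add: sum_distrib_left algebra_simps)

lemma cap_apply_mirror:
  assumes "i < 4 * m + 1"
  shows "cap_apply s1 s2 m v (4 * m - i) = cap_apply s1 s2 m (\<lambda>j. v (4 * m - j)) i"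
proof -
  have "cap_apply s1 s2 m v (4 * m - i)
      = (\<Sum>j<4 * m + 1. cap_coeff s1 s2 m (4 * m - i) (4 * m + 1 - Suc j) * v (4 * m + 1 - Suc j))"
    unfolding cap_apply_def by (rule sum.nat_diff_reindex[symmetric])
  also have "\<dots> = (\<Sum>j<4 * m + 1. cap_coeff s1 s2 m i j * v (4 * m - j))"
    by (intro sum.cong) (use assms cap_coeff_mirror in auto)
  finally show ?thesis unfolding cap_apply_def .
qed

lemma cap_apply_first_row:
  assumes "1 \<le> m" shows "cap_apply s1 s2 m v 0 = 1 / s1 * v 0 - 1 / s1 * v 1"
  using cap_apply_tridiag[of 0 m s1 s2 v] cap_coeff_super[of s1 s2 m 0] assms
  by (simp add: cap_coeff_diag cap_offdiag_def)

lemma cap_apply_left_row: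
  assumes "Suc i < 2 * m"
  shows "cap_apply s1 s2 m v (Suc i) =
    (if even i then - (1 / s1) else - (1 / s2)) * v i + (1 / s1 + 1 / s2) * v (Suc i)
    + (if even i then - (1 / s2) else - (1 / s1)) * v (Suc (Suc i))"
  using cap_apply_tridiag[of "Suc i" m s1 s2 v] cap_coeff_sub[of s1 s2 m i]
    cap_coeff_super[of s1 s2 m "Suc i"] assms
  by (simp add: cap_coeff_diag cap_offdiag_def)

lemma cap_apply_center_row:
  assumes "1 \<le> m"
  shows "cap_apply s1 s2 m v (2 * m) =
    - (1 / s2) * v (2 * m - 1) + 2 / s2 * v (2 * m) - 1 / s2 * v (2 * m + 1)"
proof -
  obtain k where "2 * m = Suc k" using assms by (cases "2 * m") auto
  moreover from this have "odd k" by presburger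
  ultimately have k: "2 * m = Suc k" "odd k" .
  show ?thesis
    using cap_apply_tridiag[of "2 * m" m s1 s2 v] cap_coeff_sub[of s1 s2 m k]
      cap_coeff_super[of s1 s2 m "2 * m"] assms k
    by (simp add: cap_coeff_diag cap_offdiag_def)
qed

lemma left_rows_imp_left_solution:
  assumes "0 < s1" "0 < s2" "1 \<le> m"
    and rows: "\<forall>i<2 * m. cap_apply s1 s2 m v i = l * v i"
  shows "i \<le> 2 * m \<Longrightarrow> v i = v 0 * left_solution (1 / s1) (1 / s2) l i"
proof (induction i rule: less_induct)
  case (less i)
  let ?a = "1 / s1" and ?b = "1 / s2"
  consider "i = 0" | "i = 1" | j where "i = Suc (Suc j)" by (metis One_nat_def not0_implies_Suc)
  then show ?case
  proof cases
    case 1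
    then show ?thesis by simp
  next
    case 2
    have row0: "?a * v 0 - ?a * v 1 = l * v 0"
      using rows cap_apply_first_row[OF assms(3), of s1 s2 v] assms(3) by simp
    have solve: "a * x - a * y = l * x \<Longrightarrow> y = x * ((a - l) / a)" if "a \<noteq> 0" for a x y :: real
      using that by (simp add: field_simps)
    have "v 1 = v 0 * ((?a - l) / ?a)" using assms(1) by (intro solve row0) simp
    then show ?thesis using 2 by simp
  next
    case 3
    have IH: "v j = v 0 * left_solution ?a ?b l j" "v (Suc j) = v 0 * left_solution ?a ?b l (Suc j)"
      using less.IH[of j] less.IH[of "Suc j"] less.prems 3 by simp_all
    have "cap_apply s1 s2 m v (Suc j) = l * v (Suc j)" using rows less.prems 3 by simp
    then have row: "(if even j then - ?a else - ?b) * v j + (?a + ?b) * v (Suc j)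
        + (if even j then - ?b else - ?a) * v (Suc (Suc j)) = l * v (Suc j)"
      using cap_apply_left_row[of j m s1 s2 v] less.prems 3 by simp
    show ?thesis
    proof (cases "even j")
      case True
      then have "v (Suc (Suc j)) = ((?a + ?b - l) * v (Suc j) - ?a * v j) / ?b"
        using row assms by (simp add: field_simps)
      then show ?thesis using True IH 3 by (simp add: algebra_simps diff_divide_distrib)
    next
      case False
      then have "v (Suc (Suc j)) = ((?a + ?b - l) * v (Suc j) - ?b * v j) / ?a"
        using row assms by (simp add: field_simps)
      then show ?thesis using False IH 3 by (simp add: algebra_simps diff_divide_distrib)
    qed
  qed
qed

lemma left_solution_left_rows:
  assumes "0 < s1" "0 < s2" "1 \<le> m"
    and v: "\<forall>i\<le>2 * m. v i = left_solution (1 / s1) (1 / s2) l i"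
    and i: "i < 2 * m"
  shows "cap_apply s1 s2 m v i = l * v i"
proof (cases i)
  case 0
  have "v 0 = 1" "v 1 = (1 / s1 - l) / (1 / s1)" using v i by auto
  moreover have "\<And>a. a \<noteq> 0 \<Longrightarrow> a * 1 - a * ((a - l) / a) = l * 1" by (simp add: field_simps)
  ultimately show ?thesis using 0 cap_apply_first_row[OF assms(3), of s1 s2 v] assms(1) by simp
next
  case (Suc j)
  let ?a = "1 / s1" and ?b = "1 / s2"
  have vj: "v j = left_solution ?a ?b l j" "v (Suc j) = left_solution ?a ?b l (Suc j)"
    "v (Suc (Suc j)) = left_solution ?a ?b l (Suc (Suc j))"
    using v i Suc by auto
  show ?thesis
    unfolding Suc cap_apply_left_row[of j m s1 s2 v, OF i[unfolded Suc]] vj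
    using assms(1,2) by (cases "even j") (simp_all add: field_simps)
qed

lemma cap_mat_mult_vec_nth:
  assumes "dim_vec w = 4 * m + 1" "i < 4 * m + 1"
  shows "(cap_mat s1 s2 m *\<^sub>v w) $ i = cap_apply s1 s2 m (\<lambda>j. w $ j) i"
proof -
  have "(cap_mat s1 s2 m *\<^sub>v w) $ i = (\<Sum>j\<in>{0..<4 * m + 1}. row (cap_mat s1 s2 m) i $ j * w $ j)"
    using assms by (simp add: cap_mat_def scalar_prod_def)
  also have "\<dots> = cap_apply s1 s2 m (\<lambda>j. w $ j) i"
    unfolding cap_apply_def atLeast0LessThan using assms
    by (intro sum.cong) (auto simp: cap_mat_def cap_coeff_def)
  finally show ?thesis .
qed

lemma dim_row_cap_mat [simp]: "dim_row (cap_mat s1 s2 m) = 4 * m + 1"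
  by (simp add: cap_mat_def)

lemma cap_mat_eigen_eq_iff:
  assumes "dim_vec w = 4 * m + 1"
  shows "cap_mat s1 s2 m *\<^sub>v w = l \<cdot>\<^sub>v w \<longleftrightarrow>
    (\<forall>i<4 * m + 1. cap_apply s1 s2 m (\<lambda>j. w $ j) i = l * w $ i)"
  using assms cap_mat_mult_vec_nth[OF assms] by (auto simp: vec_eq_iff cap_mat_def)

lemma eigenvalue_cap_mat_iff:
  "eigenvalue (cap_mat s1 s2 m) l \<longleftrightarrow>
    (\<exists>v. (\<exists>i<4 * m + 1. v i \<noteq> 0) \<and> (\<forall>i<4 * m + 1. cap_apply s1 s2 m v i = l * v i))"
proof
  assume "eigenvalue (cap_mat s1 s2 m) l"
  then obtain w where "w \<in> carrier_vec (4 * m + 1)" "w \<noteq> 0\<^sub>v (4 * m + 1)"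
    "cap_mat s1 s2 m *\<^sub>v w = l \<cdot>\<^sub>v w"
    unfolding eigenvalue_def eigenvector_def dim_row_cap_mat by blast
  then have w: "dim_vec w = 4 * m + 1" "w \<noteq> 0\<^sub>v (4 * m + 1)" "cap_mat s1 s2 m *\<^sub>v w = l \<cdot>\<^sub>v w"
    by auto
  then show "\<exists>v. (\<exists>i<4 * m + 1. v i \<noteq> 0) \<and> (\<forall>i<4 * m + 1. cap_apply s1 s2 m v i = l * v i)"
    using cap_mat_eigen_eq_iff[OF w(1)] by (intro exI[of _ "\<lambda>j. w $ j"]) (auto simp: vec_eq_iff)
next
  assume "\<exists>v. (\<exists>i<4 * m + 1. v i \<noteq> 0) \<and> (\<forall>i<4 * m + 1. cap_apply s1 s2 m v i = l * v i)"
  then obtain v where nz: "\<exists>i<4 * m + 1. v i \<noteq> 0"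
    and rows: "\<forall>i<4 * m + 1. cap_apply s1 s2 m v i = l * v i" by blast
  have "cap_apply s1 s2 m (\<lambda>j. vec (4 * m + 1) v $ j) i = cap_apply s1 s2 m v i" for i
    by (intro cap_apply_cong) simp
  then have "cap_mat s1 s2 m *\<^sub>v vec (4 * m + 1) v = l \<cdot>\<^sub>v vec (4 * m + 1) v"
    using rows by (subst cap_mat_eigen_eq_iff) auto
  moreover have "vec (4 * m + 1) v \<noteq> 0\<^sub>v (4 * m + 1)" using nz by (auto simp: vec_eq_iff)
  ultimately show "eigenvalue (cap_mat s1 s2 m) l"
    unfolding eigenvalue_def eigenvector_def by (intro exI[of _ "vec (4 * m + 1) v"]) simp
qed

lemma dimer_gap_inverse: "0 < s1 \<Longrightarrow> s1 < s2 \<Longrightarrow> dimer_gap (1 / s1) (1 / s2)"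
  by unfold_locales (auto simp: frac_less2)

definition sym_solution :: "real \<Rightarrow> real \<Rightarrow> real \<Rightarrow> nat \<Rightarrow> nat \<Rightarrow> real" where
  "sym_solution a b l m i = left_solution a b l (if i \<le> 2 * m then i else 4 * m - i)"

lemma sym_solution_off_center_rows:
  fixes s1 s2 l :: real
  assumes "0 < s1" "0 < s2" "1 \<le> m" "i < 4 * m + 1" "i \<noteq> 2 * m"
  defines "v \<equiv> sym_solution (1 / s1) (1 / s2) l m"
  shows "cap_apply s1 s2 m v i = l * v i"
proof -
  have left: "cap_apply s1 s2 m v j = l * v j" if "j < 2 * m" for j
    using that assms by (intro left_solution_left_rows) (auto simp: sym_solution_def)
  show ?thesis
  proof (cases "i < 2 * m")
    case True
    then show ?thesis by (rule left)
  next
    case False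
    then have j: "4 * m - i < 4 * m + 1" "4 * m - i < 2 * m" using assms by auto
    have "cap_apply s1 s2 m v i = cap_apply s1 s2 m v (4 * m - (4 * m - i))" using assms by simp
    also have "\<dots> = cap_apply s1 s2 m (\<lambda>j. v (4 * m - j)) (4 * m - i)" by (rule cap_apply_mirror[OF j(1)])
    also have "\<dots> = cap_apply s1 s2 m v (4 * m - i)"
      by (intro cap_apply_cong) (auto simp: v_def sym_solution_def intro!: arg_cong[where f="left_solution _ _ _"])
    also have "\<dots> = l * v (4 * m - i)" using left j by simp
    also have "v (4 * m - i) = v i" unfolding v_def sym_solution_def using False assms by auto
    finally show ?thesis .
  qed
qed

lemma sym_solution_center_row:
  fixes s1 s2 l :: real
  assumes "1 \<le> m"
  defines "v \<equiv> sym_solution (1 / s1) (1 / s2) l m"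
  shows "cap_apply s1 s2 m v (2 * m) - l * v (2 * m) = center_residual (1 / s1) (1 / s2) l m"
proof -
  have "v (2 * m - 1) = left_solution (1 / s1) (1 / s2) l (2 * m - 1)"
    "v (2 * m) = left_solution (1 / s1) (1 / s2) l (2 * m)"
    "v (2 * m + 1) = left_solution (1 / s1) (1 / s2) l (2 * m - 1)"
    unfolding v_def sym_solution_def using assms by auto
  then show ?thesis unfolding cap_apply_center_row[OF assms(1)] center_residual_def
    by (simp add: algebra_simps del: left_solution.simps)
qed

text \<open>An eigenvector is even about the defect: its two halves solve the same recurrence from
  either end, and \<open>left_solution \<dots> (2m) \<noteq> 0\<close> forces equal initial values.\<close>

lemma cap_eigenvector_eq_sym_solution:
  assumes s: "0 < s1" "s1 < s2" and m: "1 \<le> m" and l: "2 / s2 < l" "l < 2 / s1"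
    and rows: "\<forall>i<4 * m + 1. cap_apply s1 s2 m v i = l * v i" and i: "i < 4 * m + 1"
  shows "v i = v 0 * sym_solution (1 / s1) (1 / s2) l m i"
proof -
  let ?p = "left_solution (1 / s1) (1 / s2) l"
  define w where "w = (\<lambda>j. v (4 * m - j))"
  have "cap_apply s1 s2 m w j = l * w j" if "j < 4 * m + 1" for j
    using rows cap_apply_mirror[OF that, of s1 s2 v] that unfolding w_def by simp
  then have w_left: "w j = w 0 * ?p j" if "j \<le> 2 * m" for j
    using s m that by (intro left_rows_imp_left_solution) auto
  have v_left: "v j = v 0 * ?p j" if "j \<le> 2 * m" for j
    using s m rows that by (intro left_rows_imp_left_solution) auto
  have "?p (2 * m) \<noteq> 0"
    using dimer_gap.left_solution_even_ne_0[OF dimer_gap_inverse[OF s]] l by simp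
  moreover have "v 0 * ?p (2 * m) = w 0 * ?p (2 * m)"
    using v_left[of "2 * m"] w_left[of "2 * m"] unfolding w_def by (simp add: mult_2)
  ultimately have "w 0 = v 0" by simp
  then show ?thesis
    using v_left[of i] w_left[of "4 * m - i"] i unfolding w_def sym_solution_def by auto
qed

lemma eigenvalue_cap_mat_iff_residual:
  assumes s: "0 < s1" "s1 < s2" and m: "1 \<le> m" and l: "2 / s2 < l" "l < 2 / s1"
  shows "eigenvalue (cap_mat s1 s2 m) l \<longleftrightarrow> center_residual (1 / s1) (1 / s2) l m = 0"
proof
  let ?v = "sym_solution (1 / s1) (1 / s2) l m"
  assume "eigenvalue (cap_mat s1 s2 m) l"
  then obtain v where nz: "\<exists>i<4 * m + 1. v i \<noteq> 0"
    and rows: "\<forall>i<4 * m + 1. cap_apply s1 s2 m v i = l * v i"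
    unfolding eigenvalue_cap_mat_iff by blast
  have v: "v i = v 0 * ?v i" if "i < 4 * m + 1" for i
    using cap_eigenvector_eq_sym_solution[OF s m l rows that] .
  then have "v 0 \<noteq> 0" using nz by force
  have "cap_apply s1 s2 m v (2 * m) = v 0 * cap_apply s1 s2 m ?v (2 * m)"
    using v by (subst cap_apply_scale[symmetric]) (rule cap_apply_cong)
  moreover have "cap_apply s1 s2 m v (2 * m) = l * (v 0 * ?v (2 * m))"
    using rows v[of "2 * m"] by simp
  ultimately have "v 0 * (cap_apply s1 s2 m ?v (2 * m) - l * ?v (2 * m)) = 0"
    by (simp add: algebra_simps)
  then show "center_residual (1 / s1) (1 / s2) l m = 0"
    using \<open>v 0 \<noteq> 0\<close> sym_solution_center_row[OF m] by simp
next
  let ?v = "sym_solution (1 / s1) (1 / s2) l m"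
  assume residual: "center_residual (1 / s1) (1 / s2) l m = 0"
  have "cap_apply s1 s2 m ?v i = l * ?v i" if "i < 4 * m + 1" for i
  proof (cases "i = 2 * m")
    case True
    then show ?thesis using sym_solution_center_row[OF m, of s1 s2 l] residual by simp
  next
    case False
    then show ?thesis using sym_solution_off_center_rows[OF _ _ m that] s by simp
  qed
  moreover have "?v 0 = 1" by (simp add: sym_solution_def)
  ultimately show "eigenvalue (cap_mat s1 s2 m) l" unfolding eigenvalue_cap_mat_iff
    by (intro exI[of _ ?v]) auto
qed

lemma lambda_star_eq_lambda_limit: "lambda_star s1 s2 = lambda_limit (1 / s1) (1 / s2)"
  unfolding lambda_star_def lambda_limit_def by (simp add: power_divide)

theorem cap_mat_gap_eigenvalue_asymptotics:
  assumes "0 < s1" "s1 < s2"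
  shows "\<exists>M\<ge>1. \<exists>A>0. \<exists>B>0. \<forall>m\<ge>M.
    (\<exists>!l. eigenvalue (cap_mat s1 s2 m) l \<and> l \<in> {2 / s2<..<2 / s1}) \<and>
    (\<forall>l. eigenvalue (cap_mat s1 s2 m) l \<and> l \<in> {2 / s2<..<2 / s1} \<longrightarrow>
       \<bar>l - lambda_star s1 s2\<bar> < A * exp (- B * real (4 * m + 1)))"
proof -
  interpret dimer_gap "1 / s1" "1 / s2" using dimer_gap_inverse[OF assms] .
  have eig_iff: "eigenvalue (cap_mat s1 s2 m) l \<and> l \<in> {2 / s2<..<2 / s1} \<longleftrightarrow>
      2 * (1 / s2) < l \<and> l < 2 * (1 / s1) \<and> ratio m l = center_ratio (1 / s1) l" if "1 \<le> m" for m l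
    using eigenvalue_cap_mat_iff_residual[OF assms that] ratio_eq_center_ratio_iff[OF that] by auto
  obtain M A B where "1 \<le> M" "0 < A" "0 < B" and roots: "\<forall>m\<ge>M.
     (\<exists>!l. 2 * (1 / s2) < l \<and> l < 2 * (1 / s1) \<and> ratio m l = center_ratio (1 / s1) l) \<and>
     (\<forall>l. 2 * (1 / s2) < l \<and> l < 2 * (1 / s1) \<and> ratio m l = center_ratio (1 / s1) l \<longrightarrow>
        \<bar>l - lambda_limit (1 / s1) (1 / s2)\<bar> < A * exp (- B * real (4 * m + 1)))"
    using ratio_root_asymptotics by blast
  moreover have "(\<exists>!l. eigenvalue (cap_mat s1 s2 m) l \<and> l \<in> {2 / s2<..<2 / s1}) \<and>
    (\<forall>l. eigenvalue (cap_mat s1 s2 m) l \<and> l \<in> {2 / s2<..<2 / s1} \<longrightarrow>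
       \<bar>l - lambda_star s1 s2\<bar> < A * exp (- B * real (4 * m + 1)))" if "M \<le> m" for m
    using roots that \<open>1 \<le> M\<close> unfolding lambda_star_eq_lambda_limit eig_iff[OF order_trans[OF \<open>1 \<le> M\<close> that]]
    by blast
  ultimately show ?thesis by blast
qed

lemma lambda_star_in_gap:
  assumes "0 < s1" "s1 < s2" shows "lambda_star s1 s2 \<in> {2 / s2<..<2 / s1}"
proof -
  interpret dimer_gap "1 / s1" "1 / s2" using dimer_gap_inverse[OF assms] .
  show ?thesis
    unfolding lambda_star_eq_lambda_limit using lambda_limit_bounds b_less_a by auto
qed

lemma sqrt_diff_le:
  fixes x y :: real assumes "0 \<le> x" "0 < y"
  shows "\<bar>sqrt x - sqrt y\<bar> \<le> \<bar>x - y\<bar> / sqrt y"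
proof -
  have "(sqrt x - sqrt y) * (sqrt x + sqrt y) = x - y"
    using assms by (simp add: algebra_simps power2_eq_square[symmetric])
  then have "\<bar>sqrt x - sqrt y\<bar> * (sqrt x + sqrt y) = \<bar>x - y\<bar>"
    using assms by (metis abs_mult abs_of_nonneg add_nonneg_nonneg real_sqrt_ge_zero less_imp_le)
  moreover have "\<bar>sqrt x - sqrt y\<bar> * sqrt y \<le> \<bar>sqrt x - sqrt y\<bar> * (sqrt x + sqrt y)"
    using assms by (intro mult_left_mono) auto
  ultimately show ?thesis using assms by (simp add: field_simps)
qed

lemma scaled_sqrt_diff_less:
  fixes vb \<delta> l L e :: real
  assumes "0 < vb" "0 < \<delta>" "0 \<le> l" "0 < L" "\<bar>l - L\<bar> < e"
  shows "\<bar>vb * sqrt (\<delta> * l) - vb * sqrt (\<delta> * L)\<bar> < vb * sqrt \<delta> / sqrt L * e"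
proof -
  have "\<bar>vb * sqrt (\<delta> * l) - vb * sqrt (\<delta> * L)\<bar> = vb * sqrt \<delta> * \<bar>sqrt l - sqrt L\<bar>"
    using assms by (simp add: real_sqrt_mult abs_mult right_diff_distrib[symmetric] mult.assoc)
  also have "\<dots> \<le> vb * sqrt \<delta> * (\<bar>l - L\<bar> / sqrt L)"
    using sqrt_diff_le[OF assms(3,4)] assms by (intro mult_left_mono) auto
  also have "\<dots> < vb * sqrt \<delta> * (e / sqrt L)"
    using assms by (intro mult_strict_left_mono divide_strict_right_mono) auto
  finally show ?thesis by simp
qed

theorem mainTheorem9:
  fixes s1 s2 :: real
  assumes "0 < s1" and "s1 < s2"
  shows "lambda_star s1 s2 \<in> {2/s2<..<2/s1} \<and>
    (\<exists>N0::nat. \<exists>A B::real. A > 0 \<and> B > 0 \<and>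
      (\<forall>m::nat. m \<ge> 1 \<longrightarrow> 4*m+1 \<ge> N0 \<longrightarrow>
         (\<exists>!l. eigenvalue (cap_mat s1 s2 m) l \<and> l \<in> {2/s2<..<2/s1}) \<and>
         (\<forall>l. eigenvalue (cap_mat s1 s2 m) l \<and> l \<in> {2/s2<..<2/s1} \<longrightarrow>
            \<bar>l - lambda_star s1 s2\<bar> < A * exp (- B * real (4*m+1)))) \<and>
      (\<forall>vb \<delta>::real. vb > 0 \<longrightarrow> \<delta> > 0 \<longrightarrow>
         (\<exists>A'>0. \<forall>m::nat. m \<ge> 1 \<longrightarrow> 4*m+1 \<ge> N0 \<longrightarrow>
            (\<forall>l. eigenvalue (cap_mat s1 s2 m) l \<and> l \<in> {2/s2<..<2/s1} \<longrightarrow>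
               \<bar>vb * sqrt (\<delta> * l) - vb * sqrt (\<delta> * lambda_star s1 s2)\<bar>
                 < A' * exp (- B * real (4*m+1))))))"
proof -
  let ?L = "lambda_star s1 s2"
  obtain M A B where "0 < A" "0 < B" and eig: "\<forall>m\<ge>M.
    (\<exists>!l. eigenvalue (cap_mat s1 s2 m) l \<and> l \<in> {2 / s2<..<2 / s1}) \<and>
    (\<forall>l. eigenvalue (cap_mat s1 s2 m) l \<and> l \<in> {2 / s2<..<2 / s1} \<longrightarrow>
       \<bar>l - ?L\<bar> < A * exp (- B * real (4 * m + 1)))"
    using cap_mat_gap_eigenvalue_asymptotics[OF assms] by blast
  have gap_pos: "0 < x" if "x \<in> {2 / s2<..<2 / s1}" for x
    using that assms by (smt (verit) divide_pos_pos greaterThanLessThan_iff)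
  have L: "?L \<in> {2 / s2<..<2 / s1}" using lambda_star_in_gap[OF assms] .
  moreover have "0 < ?L" using gap_pos[OF L] .
  then have "\<exists>A'>0. \<forall>m. m \<ge> 1 \<longrightarrow> 4 * m + 1 \<ge> 4 * M + 1 \<longrightarrow>
      (\<forall>l. eigenvalue (cap_mat s1 s2 m) l \<and> l \<in> {2 / s2<..<2 / s1} \<longrightarrow>
         \<bar>vb * sqrt (\<delta> * l) - vb * sqrt (\<delta> * ?L)\<bar> < A' * exp (- B * real (4 * m + 1)))"
    if "vb > 0" "\<delta> > 0" for vb \<delta>
  proof (intro exI[of _ "vb * sqrt \<delta> / sqrt ?L * A"] conjI allI impI)
    show "0 < vb * sqrt \<delta> / sqrt ?L * A" using that \<open>0 < ?L\<close> \<open>0 < A\<close> by simp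
    fix m l assume m: "1 \<le> m" "4 * M + 1 \<le> 4 * m + 1"
      and l: "eigenvalue (cap_mat s1 s2 m) l \<and> l \<in> {2 / s2<..<2 / s1}"
    then have "\<bar>l - ?L\<bar> < A * exp (- B * real (4 * m + 1))" using eig by simp
    moreover have "0 \<le> l" using gap_pos l by (simp add: less_imp_le)
    ultimately show "\<bar>vb * sqrt (\<delta> * l) - vb * sqrt (\<delta> * ?L)\<bar>
        < vb * sqrt \<delta> / sqrt ?L * A * exp (- B * real (4 * m + 1))"
      using scaled_sqrt_diff_less that \<open>0 < ?L\<close> by (simp add: mult.assoc)
  qed
  ultimately show ?thesis using eig \<open>0 < A\<close> \<open>0 < B\<close>
    by (intro conjI exI[of _ "4 * M + 1"] exI[of _ A] exI[of _ B]) auto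
qed

end
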